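(* Let $\mathcal{Z}$ be a measurable data space, $m\geq 1$ an integer, $\mathcal{H}$ a measurable predictor space, and $\ell:\mathcal{H}\times\mathcal{Z}\to[0,K]$ a measurable loss function bounded by a constant $K>0$. Let $\mu$ be any probability distribution on $\mathcal{Z}^m$ and let $S=(z_1,\dots,z_m)\sim\mu$. Let $(\mathcal{F}_i)_{i\geq 0}$ be a filtration adapted to $S$. Let $\lambda>0$ and $\delta\in(0,1)$. Let $(P_i)_{i=1}^m$ be any online predictive sequence of stochastic kernels, and let $(Q_i)_{i=1}^m$ be any sequence of stochastic kernels from $\mathcal{Z}^m$ to $\mathcal{H}$. Writing $Q_{i,S}:=Q_i(S,\cdot)$ and $P_{i,S}:=P_i(S,\cdot)$, with probability at least $1-\delta$ over $S\sim\mu$, \[ \sum_{i=1}^m \mathbb{E}_{h_i\sim Q_{i,S}}\Big[\mathbb{E}[\ell(h_i,z_i)\mid\mathcal{F}_{i-1}]\Big]\leq \sum_{i=1}^m\Big(\mathbb{E}_{h_i\sim Q_{i,S}}[\ell(h_i,z_i)]+\frac{\operatorname{KL}(Q_{i,S}\|P_{i,S})}{\lambda}\Big)+\frac{\lambda m K^2}{2}+\frac{\log(1/\delta)}{\lambda}. \] Here $\mathbb{E}[\ell(h,z_i)\mid\mathcal{F}_{i-1}]$ denotes the conditional expectation for a fixed $h$, then evaluated at $h=h_i$.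
   Context: A stochastic kernel from $\mathcal{Z}^m$ to $\mathcal{H}$ (with $\sigma$-algebra $\Sigma_{\mathcal{H}}$) is a map $Q:\mathcal{Z}^m\times\Sigma_{\mathcal{H}}\to[0,1]$ such that for every $B\in\Sigma_{\mathcal{H}}$, $S\mapsto Q(S,B)$ is measurable, and for every $S$, $B\mapsto Q(S,B)$ is a probability measure on $\mathcal{H}$. A sequence of stochastic kernels $(P_i)_{i=1}^m$ is an online predictive sequence if (i) for all $i\geq1$ and all $S$, $P_i(S,\cdot)$ is $\mathcal{F}_{i-1}$-measurable (it depends on the data only through $\mathcal{F}_{i-1}$; in particular $P_1(S,\cdot)$ is a data-free probability measure), and (ii) for all $i\geq 2$, $P_i(S,\cdot)$ is absolutely continuous with respect to $P_{i-1}(S,\cdot)$. $\operatorname{KL}$ denotes the Kullback–Leibler divergence (equal to $+\infty$ when the first measure is not absolutely continuous w.r.t. the second). No assumption (such as independence) is made on $\mu$. *)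

theory Defs
  imports "HOL-Probability.Probability"
begin

text \<open>Kullback-Leibler divergence KL(Q || P) with values in the extended reals:
  the usual integral of the log Radon-Nikodym derivative dQ/dP with respect to Q
  (the library notion KL_divergence with natural log) when Q is absolutely continuous
  with respect to P and the log-density is Q-integrable; +infinity otherwise.
  (The negative part of the integrand always has Q-integral at most 1/e, so
  non-integrability means the integral is +infinity.)\<close>
definition KL_div :: "'a measure \<Rightarrow> 'a measure \<Rightarrow> ereal" where
  "KL_div Q P =
     (if absolutely_continuous P Q \<and> integrable Q (entropy_density (exp 1) P Q)
      then ereal (KL_divergence (exp 1) P Q) else \<infinity>)"

definition is_rcd :: "'a measure \<Rightarrow> 'a measure \<Rightarrow> ('a \<Rightarrow> 'b) \<Rightarrow> 'b measure \<Rightarrow> ('a \<Rightarrow> 'b measure) \<Rightarrow> bool" where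
  "is_rcd M F X MX \<kappa> \<longleftrightarrow>
     \<kappa> \<in> measurable F (prob_algebra MX) \<and>
     (\<forall>A\<in>sets MX. AE x in M. measure (\<kappa> x) A
          = real_cond_exp M F (indicator {y \<in> space M. X y \<in> A}) x)"

end

theory Submission
  imports Defs
begin

(* For a fixed predictor h the gap between the conditional risk of h at step i and its loss
   on z_i lies in [-K, K], so by Hoeffding's lemma exp(lam * gap - lam^2 K^2 / 2) has
   conditional mean at most 1 given F_(i-1); averaging h over the F_(i-1)-measurable prior
   P_i preserves this. The product over i of these prior averages therefore has mean at most 1
   (integrate out z_m, z_(m-1), ... against their regular conditional distributions), and by
   Markov's inequality it is at most 1/delta with probability at least 1 - delta. On that
   event, the Donsker-Varadhan inequality  int f dQ <= KL(Q||P) + ln int exp f dP,  applied at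
   each step to f = lam * gap - lam^2 K^2 / 2 with Q = Q_i and P = P_i, gives the bound after
   summing over i. *)

lemma integral_measurable_subprob_algebra2:
  fixes f :: "'a \<Rightarrow> 'b \<Rightarrow> real"
  assumes f[measurable]: "(\<lambda>(x, y). f x y) \<in> borel_measurable (M \<Otimes>\<^sub>M N)"
    and L[measurable]: "L \<in> M \<rightarrow>\<^sub>M subprob_algebra N"
  shows "(\<lambda>x. integral\<^sup>L (L x) (f x)) \<in> borel_measurable M"
proof -
  note integral_measurable_subprob_algebra[measurable] measurable_distr2[measurable]
  have "(\<lambda>x. integral\<^sup>L (distr (L x) (M \<Otimes>\<^sub>M N) (Pair x)) (\<lambda>(x, y). f x y)) \<in> borel_measurable M"
    by measurable
  then show ?thesis
  proof (rule measurable_cong[THEN iffD1, rotated])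
    fix x assume x: "x \<in> space M"
    have sets_L: "sets (L x) = sets N"
      using measurable_space[OF L x] by (simp add: space_subprob_algebra)
    have "Pair x \<in> L x \<rightarrow>\<^sub>M M \<Otimes>\<^sub>M N"
      using measurable_cong_sets[OF sets_L refl, of "M \<Otimes>\<^sub>M N"] measurable_Pair1'[OF x, of N] by simp
    from integral_distr[OF this f]
    show "integral\<^sup>L (distr (L x) (M \<Otimes>\<^sub>M N) (Pair x)) (\<lambda>(x, y). f x y) = integral\<^sup>L (L x) (f x)"
      by simp
  qed
qed

lemma measurable_id_subalgebra: "subalgebra M F \<Longrightarrow> (\<lambda>x. x) \<in> M \<rightarrow>\<^sub>M F"
  by (auto simp: subalgebra_def measurable_def)

lemma is_rcd_measurable:
  assumes "subalgebra M F" "is_rcd M F X N \<kappa>"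
  shows "\<kappa> \<in> M \<rightarrow>\<^sub>M prob_algebra N"
  using assms by (auto simp: is_rcd_def intro: measurable_from_subalg)

lemma emeasure_rcd_rectangle:
  assumes "prob_space M" and sub: "subalgebra M F" and X[measurable]: "X \<in> M \<rightarrow>\<^sub>M N"
    and rcd: "is_rcd M F X N \<kappa>" and B: "B \<in> sets F" and C[measurable]: "C \<in> sets N"
  shows "emeasure M {x \<in> space M. x \<in> B \<and> X x \<in> C} = (\<integral>\<^sup>+x. indicator B x * emeasure (\<kappa> x) C \<partial>M)"
proof -
  interpret prob_space M by fact
  interpret S: finite_measure_subalgebra M F
    using sub by unfold_locales
  have BM: "B \<in> sets M"
    using B sub by (auto simp: subalgebra_def)
  have \<kappa>: "\<kappa> \<in> M \<rightarrow>\<^sub>M prob_algebra N"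
    by (rule is_rcd_measurable[OF sub rcd])
  then have [measurable]: "(\<lambda>x. measure (\<kappa> x) C) \<in> borel_measurable M"
    by measurable
  have \<kappa>x: "prob_space (\<kappa> x)" if "x \<in> space M" for x
    using measurable_space[OF \<kappa> that] by (simp add: space_prob_algebra)
  define XC where "XC = {y \<in> space M. X y \<in> C}"
  have [measurable]: "XC \<in> sets M"
    unfolding XC_def by measurable
  have "{x \<in> space M. x \<in> B \<and> X x \<in> C} = B \<inter> XC"
    using BM sets.sets_into_space by (auto simp: XC_def)
  then have "emeasure M {x \<in> space M. x \<in> B \<and> X x \<in> C} = ennreal (\<integral>x. indicator B x * indicator XC x \<partial>M)"
    using BM by (simp add: emeasure_eq_measure indicator_inter_arith[symmetric])
  also have "(\<integral>x. indicator B x * indicator XC x \<partial>M) = (\<integral>x. indicator B x * real_cond_exp M F (indicator XC) x \<partial>M)"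
    by (rule S.real_cond_exp_intg(2)[symmetric])
       (use B BM in \<open>auto intro!: integrable_real_mult_indicator simp: emeasure_eq_measure\<close>)
  also have "\<dots> = (\<integral>x. indicator B x * measure (\<kappa> x) C \<partial>M)"
  proof -
    have "AE x in M. measure (\<kappa> x) C = real_cond_exp M F (indicator XC) x"
      using rcd C unfolding is_rcd_def XC_def by blast
    moreover have "(\<lambda>x. indicator B x * real_cond_exp M F (indicator XC) x) \<in> borel_measurable M"
      using BM by (intro borel_measurable_times borel_measurable_indicator borel_measurable_cond_exp2)
    moreover have "(\<lambda>x. indicator B x * measure (\<kappa> x) C) \<in> borel_measurable M"
      using BM by (intro borel_measurable_times borel_measurable_indicator) simp_all
    ultimately show ?thesis
      by (intro integral_cong_AE) (auto elim!: eventually_mono)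
  qed
  also have "ennreal \<dots> = (\<integral>\<^sup>+x. indicator B x * measure (\<kappa> x) C \<partial>M)"
    by (rule nn_integral_eq_integral[symmetric], rule integrable_const_bound[where B=1])
       (use BM \<kappa>x in \<open>auto simp: indicator_def intro!: AE_I2 prob_space.prob_le_1\<close>)
  also have "\<dots> = (\<integral>\<^sup>+x. indicator B x * emeasure (\<kappa> x) C \<partial>M)"
  proof (rule nn_integral_cong)
    fix x assume "x \<in> space M"
    then interpret \<kappa>x: prob_space "\<kappa> x"
      by (rule \<kappa>x)
    show "ennreal (indicator B x * measure (\<kappa> x) C) = indicator B x * emeasure (\<kappa> x) C"
      by (cases "x \<in> B") (simp_all add: \<kappa>x.emeasure_eq_measure)
  qed
  finally show ?thesis .
qed

lemma distr_graph_eq_bind_rcd: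
  assumes M: "prob_space M" and sub: "subalgebra M F" and X[measurable]: "X \<in> M \<rightarrow>\<^sub>M N"
    and rcd: "is_rcd M F X N \<kappa>"
  shows "distr M (F \<Otimes>\<^sub>M N) (\<lambda>x. (x, X x)) = M \<bind> (\<lambda>x. distr (\<kappa> x) (F \<Otimes>\<^sub>M N) (Pair x))"
    (is "?graph = M \<bind> ?K")
proof -
  interpret prob_space M by fact
  have spF: "space F = space M"
    using sub by (simp add: subalgebra_def)
  note measurable_id_subalgebra[OF sub, measurable]
  have \<kappa>: "\<kappa> \<in> M \<rightarrow>\<^sub>M prob_algebra N" by (rule is_rcd_measurable[OF sub rcd])
  have \<kappa>x: "prob_space (\<kappa> x)" "sets (\<kappa> x) = sets N" if "x \<in> space M" for x
    using measurable_space[OF \<kappa> that] by (auto simp: space_prob_algebra)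
  have "(\<lambda>(x, y). (x, y)) \<in> M \<Otimes>\<^sub>M N \<rightarrow>\<^sub>M F \<Otimes>\<^sub>M N"
    by measurable
  from measurable_distr_prob_space2[OF \<kappa> this]
  have K: "?K \<in> M \<rightarrow>\<^sub>M prob_algebra (F \<Otimes>\<^sub>M N)"
    by simp
  have M_space: "M \<in> space (prob_algebra M)"
    by (simp add: space_prob_algebra prob_space_axioms)
  show ?thesis
  proof (rule measure_eqI_generator_eq[OF Int_stable_pair_measure_generator[of F N]])
    show "{a \<times> b |a b. a \<in> sets F \<and> b \<in> sets N} \<subseteq> Pow (space F \<times> space N)"
      by (auto dest: sets.sets_into_space)
    show "sets ?graph = sigma_sets (space F \<times> space N) {a \<times> b |a b. a \<in> sets F \<and> b \<in> sets N}"
      using sets_distr sets_pair_measure by metis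
    show "sets (M \<bind> ?K) = sigma_sets (space F \<times> space N) {a \<times> b |a b. a \<in> sets F \<and> b \<in> sets N}"
      using sets_bind'[OF M_space K] sets_pair_measure by metis
    show "range (\<lambda>_. space F \<times> space N) \<subseteq> {a \<times> b |a b. a \<in> sets F \<and> b \<in> sets N}"
      by auto
    show "(\<Union>i. space F \<times> space N) = space F \<times> space N"
      by simp
    show "emeasure ?graph (space F \<times> space N) \<noteq> \<infinity>"
      using sets.top[of "F \<Otimes>\<^sub>M N"] by (subst emeasure_distr) (auto simp: emeasure_eq_measure)
    fix Y assume "Y \<in> {a \<times> b |a b. a \<in> sets F \<and> b \<in> sets N}"
    then obtain B C where Y: "Y = B \<times> C" and B: "B \<in> sets F" and C: "C \<in> sets N"
      by auto
    then have Y_sets: "Y \<in> sets (F \<Otimes>\<^sub>M N)" by auto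
    have "emeasure ?graph Y = emeasure M {x \<in> space M. x \<in> B \<and> X x \<in> C}"
      using Y_sets by (subst emeasure_distr) (auto simp: Y intro!: arg_cong[where f="emeasure M"])
    also have "\<dots> = (\<integral>\<^sup>+x. indicator B x * emeasure (\<kappa> x) C \<partial>M)"
      by (rule emeasure_rcd_rectangle[OF M sub X rcd B C])
    also have "\<dots> = (\<integral>\<^sup>+x. emeasure (?K x) Y \<partial>M)"
    proof (rule nn_integral_cong)
      fix x assume x: "x \<in> space M"
      have "emeasure (?K x) Y = emeasure (\<kappa> x) (Pair x -` Y \<inter> space (\<kappa> x))"
        using x Y_sets \<kappa>x[OF x] spF
        by (subst emeasure_distr) (auto simp: measurable_Pair2' cong: measurable_cong_sets)
      also have "\<dots> = indicator B x * emeasure (\<kappa> x) C"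
        using \<kappa>x[OF x] C
        by (auto simp: Y indicator_def dest: sets_eq_imp_space_eq sets.sets_into_space
            intro!: arg_cong[where f="emeasure (\<kappa> x)"])
      finally show "indicator B x * emeasure (\<kappa> x) C = emeasure (?K x) Y" ..
    qed
    also have "\<dots> = emeasure (M \<bind> ?K) Y"
      by (rule emeasure_bind_prob_algebra[OF M_space K Y_sets, symmetric])
    finally show "emeasure ?graph Y = emeasure (M \<bind> ?K) Y" .
  qed
qed

lemma nn_integral_rcd:
  assumes M: "prob_space M" and sub: "subalgebra M F" and X[measurable]: "X \<in> M \<rightarrow>\<^sub>M N"
    and rcd: "is_rcd M F X N \<kappa>" and f[measurable]: "f \<in> borel_measurable (F \<Otimes>\<^sub>M N)"
  shows "(\<integral>\<^sup>+x. f (x, X x) \<partial>M) = (\<integral>\<^sup>+x. \<integral>\<^sup>+y. f (x, y) \<partial>\<kappa> x \<partial>M)"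
proof -
  have spF: "space F = space M"
    using sub by (simp add: subalgebra_def)
  note measurable_id_subalgebra[OF sub, measurable]
  have \<kappa>: "\<kappa> \<in> M \<rightarrow>\<^sub>M prob_algebra N" by (rule is_rcd_measurable[OF sub rcd])
  have \<kappa>x: "sets (\<kappa> x) = sets N" if "x \<in> space M" for x
    using measurable_space[OF \<kappa> that] by (auto simp: space_prob_algebra)
  have "(\<lambda>(x, y). (x, y)) \<in> M \<Otimes>\<^sub>M N \<rightarrow>\<^sub>M F \<Otimes>\<^sub>M N"
    by measurable
  from measurable_prob_algebraD[OF measurable_distr_prob_space2[OF \<kappa> this]]
  have K: "(\<lambda>x. distr (\<kappa> x) (F \<Otimes>\<^sub>M N) (Pair x)) \<in> M \<rightarrow>\<^sub>M subprob_algebra (F \<Otimes>\<^sub>M N)"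
    by simp
  have "(\<integral>\<^sup>+x. f (x, X x) \<partial>M) = (\<integral>\<^sup>+p. f p \<partial>distr M (F \<Otimes>\<^sub>M N) (\<lambda>x. (x, X x)))"
    using f by (subst nn_integral_distr) auto
  also have "\<dots> = (\<integral>\<^sup>+x. \<integral>\<^sup>+p. f p \<partial>distr (\<kappa> x) (F \<Otimes>\<^sub>M N) (Pair x) \<partial>M)"
    unfolding distr_graph_eq_bind_rcd[OF M sub X rcd] by (rule nn_integral_bind[OF f K])
  also have "\<dots> = (\<integral>\<^sup>+x. \<integral>\<^sup>+y. f (x, y) \<partial>\<kappa> x \<partial>M)"
  proof (rule nn_integral_cong)
    fix x assume x: "x \<in> space M"
    show "(\<integral>\<^sup>+p. f p \<partial>distr (\<kappa> x) (F \<Otimes>\<^sub>M N) (Pair x)) = (\<integral>\<^sup>+y. f (x, y) \<partial>\<kappa> x)"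
      using x \<kappa>x[OF x] spF f
      by (subst nn_integral_distr) (auto simp: measurable_Pair2' cong: measurable_cong_sets)
  qed
  finally show ?thesis .
qed

lemma borel_measurable_prod_adapted:
  fixes G :: "nat \<Rightarrow> 'a \<Rightarrow> 'b \<Rightarrow> ennreal"
  assumes sub: "\<And>i. i \<le> m \<Longrightarrow> subalgebra M (F i)"
    and mono: "\<And>i j. i \<le> j \<Longrightarrow> j \<le> m \<Longrightarrow> sets (F i) \<subseteq> sets (F j)"
    and adapted: "\<And>i. 1 \<le> i \<Longrightarrow> i \<le> m \<Longrightarrow> X i \<in> F i \<rightarrow>\<^sub>M N"
    and G: "\<And>i. 1 \<le> i \<Longrightarrow> i \<le> m \<Longrightarrow> (\<lambda>(x, y). G i x y) \<in> borel_measurable (F (i - 1) \<Otimes>\<^sub>M N)"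
    and "j \<le> m"
  shows "(\<lambda>x. \<Prod>i\<in>{1..j}. G i x (X i x)) \<in> borel_measurable (F j)"
proof (intro borel_measurable_prod_ennreal)
  fix i assume "i \<in> {1..j}"
  then have i: "1 \<le> i" "i \<le> j"
    by auto
  have space_F: "space (F k) = space M" if "k \<le> m" for k
    using sub[OF that] by (simp add: subalgebra_def)
  have coarser: "f \<in> F k \<rightarrow>\<^sub>M N' \<Longrightarrow> f \<in> F j \<rightarrow>\<^sub>M N'" if "k \<le> j" for k f and N' :: "'c measure"
    using measurable_mono[of N' N' "F k" "F j"] mono[OF that \<open>j \<le> m\<close>] space_F that \<open>j \<le> m\<close> by auto
  have "(\<lambda>x. x) \<in> F j \<rightarrow>\<^sub>M F (i - 1)"
    using i coarser[of "i - 1" "\<lambda>x. x", OF _ measurable_ident_sets[OF refl]] by auto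
  moreover have "X i \<in> F j \<rightarrow>\<^sub>M N"
    using i \<open>j \<le> m\<close> coarser[of i "X i", OF _ adapted] by auto
  ultimately have "(\<lambda>x. (x, X i x)) \<in> F j \<rightarrow>\<^sub>M F (i - 1) \<Otimes>\<^sub>M N"
    by (rule measurable_Pair)
  from measurable_compose[OF this G] show "(\<lambda>x. G i x (X i x)) \<in> borel_measurable (F j)"
    using i \<open>j \<le> m\<close> by simp
qed

lemma nn_integral_prod_rcd_le_1:
  fixes G :: "nat \<Rightarrow> 'a \<Rightarrow> 'b \<Rightarrow> ennreal"
  assumes M: "prob_space M"
    and sub: "\<And>i. i \<le> m \<Longrightarrow> subalgebra M (F i)"
    and mono: "\<And>i j. i \<le> j \<Longrightarrow> j \<le> m \<Longrightarrow> sets (F i) \<subseteq> sets (F j)"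
    and adapted: "\<And>i. 1 \<le> i \<Longrightarrow> i \<le> m \<Longrightarrow> X i \<in> F i \<rightarrow>\<^sub>M N"
    and rcd: "\<And>i. 1 \<le> i \<Longrightarrow> i \<le> m \<Longrightarrow> is_rcd M (F (i - 1)) (X i) N (\<kappa> i)"
    and G: "\<And>i. 1 \<le> i \<Longrightarrow> i \<le> m \<Longrightarrow> (\<lambda>(x, y). G i x y) \<in> borel_measurable (F (i - 1) \<Otimes>\<^sub>M N)"
    and G_le_1: "\<And>i x. 1 \<le> i \<Longrightarrow> i \<le> m \<Longrightarrow> x \<in> space M \<Longrightarrow> (\<integral>\<^sup>+y. G i x y \<partial>\<kappa> i x) \<le> 1"
  shows "(\<lambda>x. \<Prod>i\<in>{1..m}. G i x (X i x)) \<in> borel_measurable M"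
    and "(\<integral>\<^sup>+x. (\<Prod>i\<in>{1..m}. G i x (X i x)) \<partial>M) \<le> 1"
proof -
  interpret prob_space M by fact
  have space_F: "space (F i) = space M" if "i \<le> m" for i
    using sub[OF that] by (simp add: subalgebra_def)
  have prod_meas: "(\<lambda>x. \<Prod>i\<in>{1..j}. G i x (X i x)) \<in> borel_measurable (F j)" if "j \<le> m" for j
    using borel_measurable_prod_adapted[where G=G and X=X, OF sub mono adapted G that] .
  then show "(\<lambda>x. \<Prod>i\<in>{1..m}. G i x (X i x)) \<in> borel_measurable M"
    using measurable_from_subalg[OF sub] by blast
  have "(\<integral>\<^sup>+x. (\<Prod>i\<in>{1..j}. G i x (X i x)) \<partial>M) \<le> 1" if "j \<le> m" for j
    using that
  proof (induction j)
    case 0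
    then show ?case by (simp add: emeasure_space_1)
  next
    case (Suc j)
    define H where "H x = (\<Prod>i\<in>{1..j}. G i x (X i x))" for x
    have [measurable]: "H \<in> borel_measurable (F j)"
      unfolding H_def using prod_meas Suc.prems by simp
    have [measurable]: "(\<lambda>(x, y). G (Suc j) x y) \<in> borel_measurable (F j \<Otimes>\<^sub>M N)"
      using G[of "Suc j"] Suc.prems by simp
    have X: "X (Suc j) \<in> M \<rightarrow>\<^sub>M N"
      using Suc.prems by (intro measurable_from_subalg[OF sub adapted]) auto
    have "(\<integral>\<^sup>+x. (\<Prod>i\<in>{1..Suc j}. G i x (X i x)) \<partial>M) = (\<integral>\<^sup>+x. H x * G (Suc j) x (X (Suc j) x) \<partial>M)"
      by (simp add: H_def atLeastAtMostSuc_conv mult.commute)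
    also have "\<dots> = (\<integral>\<^sup>+x. \<integral>\<^sup>+y. H x * G (Suc j) x y \<partial>\<kappa> (Suc j) x \<partial>M)"
      \<comment> \<open>\<open>H\<close> is \<open>F j\<close>-measurable, so it survives integrating out \<open>X (Suc j)\<close>
        as a constant factor\<close>
    proof -
      have sub_j: "subalgebra M (F j)" and rcd_j: "is_rcd M (F j) (X (Suc j)) N (\<kappa> (Suc j))"
        using sub rcd[of "Suc j"] Suc.prems by simp_all
      have "(\<lambda>(x, y). H x * G (Suc j) x y) \<in> borel_measurable (F j \<Otimes>\<^sub>M N)"
        by measurable
      from nn_integral_rcd[OF M sub_j X rcd_j this] show ?thesis
        by simp
    qed
    also have "\<dots> \<le> (\<integral>\<^sup>+x. H x \<partial>M)"
    proof (rule nn_integral_mono)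
      fix x assume x: "x \<in> space M"
      have "sets (\<kappa> (Suc j) x) = sets N"
        using measurable_space[OF is_rcd_measurable[OF sub rcd] x, of "Suc j"] Suc.prems
        by (simp add: space_prob_algebra)
      moreover have "G (Suc j) x \<in> borel_measurable N"
        using measurable_Pair2[OF G, of "Suc j" x] x space_F Suc.prems by simp
      ultimately have "(\<integral>\<^sup>+y. H x * G (Suc j) x y \<partial>\<kappa> (Suc j) x) = H x * (\<integral>\<^sup>+y. G (Suc j) x y \<partial>\<kappa> (Suc j) x)"
        by (intro nn_integral_cmult) (simp cong: measurable_cong_sets)
      also have "\<dots> \<le> H x"
        using mult_left_mono[OF G_le_1[of "Suc j" x]] x Suc.prems by simp
      finally show "(\<integral>\<^sup>+y. H x * G (Suc j) x y \<partial>\<kappa> (Suc j) x) \<le> H x" .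
    qed
    also have "\<dots> \<le> 1"
      using Suc by (simp add: H_def)
    finally show ?case .
  qed
  then show "(\<integral>\<^sup>+x. (\<Prod>i\<in>{1..m}. G i x (X i x)) \<partial>M) \<le> 1"
    by simp
qed

lemma (in prob_space) prob_le_inverse_ge_1_minus:
  assumes [measurable]: "U \<in> borel_measurable M" and U: "(\<integral>\<^sup>+x. U x \<partial>M) \<le> 1" and "0 < \<delta>"
  shows "1 - \<delta> \<le> prob {x \<in> space M. U x \<le> ennreal (1 / \<delta>)}"
proof -
  let ?A = "{x \<in> space M. U x \<le> ennreal (1 / \<delta>)}"
  have "space M - ?A \<subseteq> {x \<in> space M. 1 \<le> ennreal \<delta> * U x}"
  proof
    fix x assume x: "x \<in> space M - ?A"
    have "1 = ennreal \<delta> * ennreal (1 / \<delta>)"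
      using \<open>0 < \<delta>\<close> by (simp flip: ennreal_mult)
    also have "\<dots> \<le> ennreal \<delta> * U x"
      using x by (intro mult_left_mono) auto
    finally show "x \<in> {x \<in> space M. 1 \<le> ennreal \<delta> * U x}"
      using x by simp
  qed
  then have "emeasure M (space M - ?A) \<le> emeasure M {x \<in> space M. 1 \<le> ennreal \<delta> * U x}"
    by (intro emeasure_mono) measurable
  also have "\<dots> \<le> ennreal \<delta> * (\<integral>\<^sup>+x. U x \<partial>M)"
    using nn_integral_Markov_inequality[of U "space M" M "ennreal \<delta>"] by simp
  also have "\<dots> \<le> ennreal \<delta>"
    using mult_left_mono[OF U] by simp
  finally have "prob (space M - ?A) \<le> \<delta>"
    using \<open>0 < \<delta>\<close> by (simp add: emeasure_eq_measure)
  then show ?thesis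
    using prob_compl[of ?A] by simp
qed

lemma (in prob_space) nn_integral_exp_expectation_minus_le:
  fixes f :: "'a \<Rightarrow> real"
  assumes f[measurable]: "f \<in> borel_measurable M"
    and bounds: "\<And>x. x \<in> space M \<Longrightarrow> a \<le> f x \<and> f x \<le> b" and "0 < l"
  shows "(\<integral>\<^sup>+x. ennreal (exp (l * (expectation f - f x))) \<partial>M) \<le> ennreal (exp (l\<^sup>2 * (b - a)\<^sup>2 / 8))"
proof -
  interpret interval_bounded_random_variable M "\<lambda>x. - f x" "- b" "- a"
    using bounds by unfold_locales (auto intro!: AE_I2)
  have "- f x - expectation (\<lambda>x. - f x) = expectation f - f x" for x
    by simp
  moreover have "- a - - b = b - a"
    by simp
  ultimately show ?thesis
    using Hoeffdings_lemma_nn_integral[OF \<open>0 < l\<close>] by simp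
qed

lemma (in prob_space) integral_exp_bounded:
  fixes f :: "'a \<Rightarrow> real"
  assumes [measurable]: "f \<in> borel_measurable M" and f: "\<And>x. x \<in> space M \<Longrightarrow> \<bar>f x\<bar> \<le> B"
  shows "integrable M (\<lambda>x. exp (f x))" and "0 < (\<integral>x. exp (f x) \<partial>M)"
proof -
  show int: "integrable M (\<lambda>x. exp (f x))"
    by (intro integrable_const_bound[where B="exp B"] AE_I2) (use f in \<open>auto simp: abs_le_iff\<close>)
  have "exp (- B) \<le> (\<integral>x. exp (f x) \<partial>M)"
    by (intro integral_ge_const[OF int] AE_I2) (auto dest!: f simp: abs_le_iff)
  then show "0 < (\<integral>x. exp (f x) \<partial>M)"
    using exp_gt_zero[of "- B"] by linarith
qed

lemma nn_integral_divide_RN_deriv_le: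
  fixes g :: "'a \<Rightarrow> real"
  assumes "sigma_finite_measure P" and ac: "absolutely_continuous P Q" and sets: "sets Q = sets P"
    and [measurable]: "g \<in> borel_measurable P"
  shows "(\<integral>\<^sup>+x. ennreal (g x / enn2real (RN_deriv P Q x)) \<partial>Q) \<le> (\<integral>\<^sup>+x. ennreal (g x) \<partial>P)"
proof -
  interpret sigma_finite_measure P by fact
  have "(\<integral>\<^sup>+x. ennreal (g x / enn2real (RN_deriv P Q x)) \<partial>Q)
      = (\<integral>\<^sup>+x. RN_deriv P Q x * ennreal (g x / enn2real (RN_deriv P Q x)) \<partial>P)"
    by (rule RN_deriv_nn_integral[OF ac sets]) measurable
  also have "\<dots> \<le> (\<integral>\<^sup>+x. ennreal (g x) \<partial>P)"
  proof (intro nn_integral_mono)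
    fix x
    show "RN_deriv P Q x * ennreal (g x / enn2real (RN_deriv P Q x)) \<le> ennreal (g x)"
    proof (cases "RN_deriv P Q x")
      case (real t)
      then show ?thesis
        by (cases "t = 0"; cases "0 \<le> g x") (auto simp flip: ennreal_mult' simp: ennreal_neg)
    qed simp
  qed
  finally show ?thesis .
qed

lemma integral_divide_RN_deriv_le:
  fixes g :: "'a \<Rightarrow> real"
  assumes "prob_space P" and sets: "sets Q = sets P" and ac: "absolutely_continuous P Q"
    and g: "integrable P g" and g_nonneg: "\<And>x. x \<in> space P \<Longrightarrow> 0 \<le> g x"
  shows "integrable Q (\<lambda>x. g x / enn2real (RN_deriv P Q x))"
    and "(\<integral>x. g x / enn2real (RN_deriv P Q x) \<partial>Q) \<le> (\<integral>x. g x \<partial>P)"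
proof -
  let ?h = "\<lambda>x. g x / enn2real (RN_deriv P Q x)"
  have [measurable]: "g \<in> borel_measurable P"
    using g by simp
  have "?h \<in> borel_measurable P"
    by measurable
  then have h_meas: "?h \<in> borel_measurable Q"
    using sets by (simp cong: measurable_cong_sets)
  have h_nonneg: "AE x in Q. 0 \<le> ?h x"
    using g_nonneg sets_eq_imp_space_eq[OF sets] by (intro AE_I2) simp
  have "(\<integral>\<^sup>+x. ennreal (?h x) \<partial>Q) \<le> (\<integral>\<^sup>+x. ennreal (g x) \<partial>P)"
    by (rule nn_integral_divide_RN_deriv_le[OF prob_space_imp_sigma_finite[OF \<open>prob_space P\<close>] ac sets])
       measurable
  also have "\<dots> = ennreal (\<integral>x. g x \<partial>P)"
    using g g_nonneg by (intro nn_integral_eq_integral) (auto intro: AE_I2)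
  finally have h_le: "(\<integral>\<^sup>+x. ennreal (?h x) \<partial>Q) \<le> ennreal (\<integral>x. g x \<partial>P)" .
  show "integrable Q ?h"
    using h_le by (intro integrableI_nonneg[OF h_meas h_nonneg]) (auto simp: top.not_eq_extremum intro: le_less_trans)
  show "(\<integral>x. ?h x \<partial>Q) \<le> (\<integral>x. g x \<partial>P)"
    using h_le g_nonneg by (subst integral_eq_nn_integral[OF h_meas h_nonneg]) (auto intro: enn2real_leI)
qed

lemma AE_RN_deriv_pos:
  assumes "sigma_finite_measure P" and "sigma_finite_measure Q"
    and ac: "absolutely_continuous P Q" and sets: "sets Q = sets P"
  shows "AE x in Q. 0 < enn2real (RN_deriv P Q x)"
proof -
  interpret sigma_finite_measure P by fact
  have "AE x in P. RN_deriv P Q x \<noteq> \<infinity>"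
    by (rule RN_deriv_finite[OF assms(2) ac sets])
  then have "AE x in density P (RN_deriv P Q). 0 < enn2real (RN_deriv P Q x)"
    by (subst AE_density) (auto elim!: eventually_mono simp: enn2real_positive_iff top.not_eq_extremum)
  then show ?thesis
    by (simp only: density_RN_deriv[OF ac sets])
qed

text \<open>Donsker--Varadhan: integrate \<open>ln t \<le> t - 1\<close> at \<open>t = exp (f x) / (r x * Z)\<close>,
  where \<open>r = dQ/dP\<close> and \<open>Z = \<integral> exp f dP\<close>.\<close>
lemma integral_le_KL_divergence_ln_integral_exp:
  fixes f :: "'a \<Rightarrow> real"
  assumes "prob_space Q" "prob_space P" and sets: "sets Q = sets P"
    and ac: "absolutely_continuous P Q" and KL_int: "integrable Q (entropy_density (exp 1) P Q)"
    and f[measurable]: "f \<in> borel_measurable P" and f_bounded: "\<And>x. x \<in> space P \<Longrightarrow> \<bar>f x\<bar> \<le> B"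
  shows "(\<integral>x. f x \<partial>Q) \<le> KL_divergence (exp 1) P Q + ln (\<integral>x. exp (f x) \<partial>P)"
proof -
  interpret P: prob_space P by fact
  interpret Q: prob_space Q by fact
  define r where "r x = enn2real (RN_deriv P Q x)" for x
  define Z where "Z = (\<integral>x. exp (f x) \<partial>P)"
  define g where "g x = exp (f x) / r x" for x
  have [measurable]: "f \<in> borel_measurable Q"
    using f sets by (simp cong: measurable_cong_sets)
  have Z: "integrable P (\<lambda>x. exp (f x))" "0 < Z"
    unfolding Z_def using P.integral_exp_bounded[OF f f_bounded] by auto
  have r_pos: "AE x in Q. 0 < r x"
    unfolding r_def using prob_space_imp_sigma_finite assms(1,2) by (intro AE_RN_deriv_pos[OF _ _ ac sets])
  have entropy_density: "entropy_density (exp 1) P Q = (\<lambda>x. ln (r x))"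
    by (auto simp: entropy_density_def r_def log_def fun_eq_iff)
  have ln_r_int: "integrable Q (\<lambda>x. ln (r x))"
    using KL_int by (simp only: entropy_density)
  have f_int: "integrable Q f"
    using f_bounded sets_eq_imp_space_eq[OF sets] by (intro Q.integrable_const_bound[where B=B] AE_I2) auto
  have g_int: "integrable Q g" and g_le: "(\<integral>x. g x \<partial>Q) \<le> Z"
    unfolding g_def r_def Z_def using integral_divide_RN_deriv_le[OF assms(2) sets ac Z(1)] by auto
  have "(\<integral>x. f x - ln (r x) - ln Z \<partial>Q) \<le> (\<integral>x. g x / Z - 1 \<partial>Q)"
  proof (intro integral_mono_AE)
    show "AE x in Q. f x - ln (r x) - ln Z \<le> g x / Z - 1"
      using r_pos
    proof eventually_elim
      case (elim x)
      have "ln (exp (f x) / (r x * Z)) \<le> exp (f x) / (r x * Z) - 1"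
        using elim Z(2) by (intro ln_le_minus_one) simp
      then show ?case
        using elim Z(2) by (simp add: g_def ln_div ln_mult)
    qed
  qed (use f_int ln_r_int g_int in auto)
  then have "(\<integral>x. f x \<partial>Q) - (\<integral>x. ln (r x) \<partial>Q) - ln Z \<le> (\<integral>x. g x \<partial>Q) / Z - 1"
    using f_int ln_r_int g_int by (simp add: Q.prob_space)
  also have "\<dots> \<le> 0"
    using g_le Z(2) by simp
  finally show ?thesis
    unfolding KL_divergence_def entropy_density Z_def by linarith
qed

locale bounded_loss =
  fixes MH :: "'h measure" and MZ :: "'z measure" and loss :: "'h \<Rightarrow> 'z \<Rightarrow> real" and K :: real
  assumes measurable_loss[measurable]: "(\<lambda>(h, z). loss h z) \<in> borel_measurable (MH \<Otimes>\<^sub>M MZ)"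
    and loss_bounds: "\<And>h z. h \<in> space MH \<Longrightarrow> z \<in> space MZ \<Longrightarrow> 0 \<le> loss h z \<and> loss h z \<le> K"
begin

lemma borel_measurable_expected_loss_kernel:
  assumes "\<kappa> \<in> M \<rightarrow>\<^sub>M prob_algebra MZ"
  shows "(\<lambda>(x, h). \<integral>z. loss h z \<partial>\<kappa> x) \<in> borel_measurable (M \<Otimes>\<^sub>M MH)"
proof -
  have "(\<lambda>p. \<kappa> (fst p)) \<in> M \<Otimes>\<^sub>M MH \<rightarrow>\<^sub>M subprob_algebra MZ"
    using measurable_prob_algebraD[OF assms] by measurable
  from integral_measurable_subprob_algebra2[OF _ this, of "\<lambda>p z. loss (snd p) z"]
  show ?thesis
    by (simp add: case_prod_beta')
qed

lemma borel_measurable_expected_loss[measurable]: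
  assumes "\<kappa> \<in> space (prob_algebra MZ)"
  shows "(\<lambda>h. \<integral>z. loss h z \<partial>\<kappa>) \<in> borel_measurable MH"
proof -
  have "\<kappa> \<in> space (subprob_algebra MZ)"
    using assms by (auto simp: space_prob_algebra space_subprob_algebra prob_space_imp_subprob_space)
  then have "(\<lambda>_. \<kappa>) \<in> MH \<rightarrow>\<^sub>M subprob_algebra MZ"
    by (rule measurable_const)
  from integral_measurable_subprob_algebra2[OF measurable_loss this] show ?thesis
    by simp
qed

lemma expected_loss_bounds:
  assumes \<kappa>: "\<kappa> \<in> space (prob_algebra MZ)" and h: "h \<in> space MH"
  shows "0 \<le> (\<integral>z. loss h z \<partial>\<kappa>)" and "(\<integral>z. loss h z \<partial>\<kappa>) \<le> K"
proof -
  interpret prob_space \<kappa>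
    using \<kappa> by (simp add: space_prob_algebra)
  have sets: "sets \<kappa> = sets MZ"
    using \<kappa> by (simp add: space_prob_algebra)
  have "(\<lambda>z. loss h z) \<in> borel_measurable MZ"
    using h by measurable
  then have [measurable]: "(\<lambda>z. loss h z) \<in> borel_measurable \<kappa>"
    using sets by (simp cong: measurable_cong_sets)
  have bounds: "AE z in \<kappa>. 0 \<le> loss h z \<and> loss h z \<le> K"
    using loss_bounds[OF h] sets_eq_imp_space_eq[OF sets] by (intro AE_I2) auto
  then have "AE z in \<kappa>. norm (loss h z) \<le> K"
    by eventually_elim simp
  then have "integrable \<kappa> (\<lambda>z. loss h z)"
    by (intro integrable_const_bound[where B=K]) simp_all
  then show "0 \<le> (\<integral>z. loss h z \<partial>\<kappa>)" "(\<integral>z. loss h z \<partial>\<kappa>) \<le> K"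
    using bounds by (auto intro!: integral_ge_const integral_le_const elim: eventually_mono)
qed

lemma abs_gap_le:
  assumes "\<kappa> \<in> space (prob_algebra MZ)" "h \<in> space MH" "z \<in> space MZ"
  shows "\<bar>(\<integral>z'. loss h z' \<partial>\<kappa>) - loss h z\<bar> \<le> K"
  using expected_loss_bounds[OF assms(1,2)] loss_bounds[OF assms(2,3)] by linarith

text \<open>One factor of the exponential supermartingale: \<open>\<kappa>\<close> stands for the conditional law of
  the next data point and \<open>P\<close> for the prior over predictors at that step.\<close>
definition gap_exp_moment :: "real \<Rightarrow> 'z measure \<Rightarrow> 'h measure \<Rightarrow> 'z \<Rightarrow> real" where
  "gap_exp_moment lam \<kappa> P z =
     (\<integral>h. exp (lam * ((\<integral>z'. loss h z' \<partial>\<kappa>) - loss h z) - lam\<^sup>2 * K\<^sup>2 / 2) \<partial>P)"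

lemma borel_measurable_gap_exp_moment:
  assumes \<kappa>: "\<kappa> \<in> M \<rightarrow>\<^sub>M prob_algebra MZ" and P: "P \<in> M \<rightarrow>\<^sub>M prob_algebra MH"
  shows "(\<lambda>(x, z). gap_exp_moment lam (\<kappa> x) (P x) z) \<in> borel_measurable (M \<Otimes>\<^sub>M MZ)"
proof -
  note borel_measurable_expected_loss_kernel[OF \<kappa>, measurable]
  have "(\<lambda>p. P (fst p)) \<in> M \<Otimes>\<^sub>M MZ \<rightarrow>\<^sub>M subprob_algebra MH"
    using measurable_prob_algebraD[OF P] by measurable
  from integral_measurable_subprob_algebra2[OF _ this,
      of "\<lambda>p h. exp (lam * ((\<integral>z'. loss h z' \<partial>\<kappa> (fst p)) - loss h (snd p)) - lam\<^sup>2 * K\<^sup>2 / 2)"]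
  show ?thesis
    by (simp add: gap_exp_moment_def case_prod_beta')
qed

lemma
  assumes \<kappa>: "\<kappa> \<in> space (prob_algebra MZ)" and P: "P \<in> space (prob_algebra MH)"
    and z: "z \<in> space MZ"
  shows integrable_exp_gap: "integrable P (\<lambda>h. exp (lam * ((\<integral>z'. loss h z' \<partial>\<kappa>) - loss h z) - lam\<^sup>2 * K\<^sup>2 / 2))"
    and gap_exp_moment_pos: "0 < gap_exp_moment lam \<kappa> P z"
proof -
  interpret prob_space P
    using P by (simp add: space_prob_algebra)
  have sets: "sets P = sets MH"
    using P by (simp add: space_prob_algebra)
  have "(\<lambda>h. lam * ((\<integral>z'. loss h z' \<partial>\<kappa>) - loss h z) - lam\<^sup>2 * K\<^sup>2 / 2) \<in> borel_measurable MH"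
    using \<kappa> z by measurable
  then have meas: "(\<lambda>h. lam * ((\<integral>z'. loss h z' \<partial>\<kappa>) - loss h z) - lam\<^sup>2 * K\<^sup>2 / 2) \<in> borel_measurable P"
    using sets by (simp cong: measurable_cong_sets)
  have "\<bar>lam * ((\<integral>z'. loss h z' \<partial>\<kappa>) - loss h z) - lam\<^sup>2 * K\<^sup>2 / 2\<bar> \<le> \<bar>lam\<bar> * K + lam\<^sup>2 * K\<^sup>2 / 2"
    if "h \<in> space P" for h
  proof -
    have "\<bar>lam * ((\<integral>z'. loss h z' \<partial>\<kappa>) - loss h z)\<bar> \<le> \<bar>lam\<bar> * K"
      using abs_gap_le[OF \<kappa> _ z, of h] that sets_eq_imp_space_eq[OF sets]
      by (simp add: abs_mult mult_left_mono)
    moreover have "0 \<le> lam\<^sup>2 * K\<^sup>2 / 2"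
      by simp
    ultimately show ?thesis
      unfolding abs_le_iff by linarith
  qed
  from integral_exp_bounded[OF meas this]
  show "integrable P (\<lambda>h. exp (lam * ((\<integral>z'. loss h z' \<partial>\<kappa>) - loss h z) - lam\<^sup>2 * K\<^sup>2 / 2))"
    and "0 < gap_exp_moment lam \<kappa> P z"
    by (simp_all add: gap_exp_moment_def)
qed

lemma nn_integral_exp_gap_le_1:
  assumes \<kappa>: "\<kappa> \<in> space (prob_algebra MZ)" and h: "h \<in> space MH" and "0 < lam"
  shows "(\<integral>\<^sup>+z. ennreal (exp (lam * ((\<integral>z'. loss h z' \<partial>\<kappa>) - loss h z) - lam\<^sup>2 * K\<^sup>2 / 2)) \<partial>\<kappa>) \<le> 1"
proof -
  interpret prob_space \<kappa>
    using \<kappa> by (simp add: space_prob_algebra)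
  have sets: "sets \<kappa> = sets MZ"
    using \<kappa> by (simp add: space_prob_algebra)
  have "(\<lambda>z. loss h z) \<in> borel_measurable MZ"
    using h by measurable
  then have [measurable]: "(\<lambda>z. loss h z) \<in> borel_measurable \<kappa>"
    using sets by (simp cong: measurable_cong_sets)
  have "(\<integral>\<^sup>+z. ennreal (exp (lam * ((\<integral>z'. loss h z' \<partial>\<kappa>) - loss h z) - lam\<^sup>2 * K\<^sup>2 / 2)) \<partial>\<kappa>)
      = (\<integral>\<^sup>+z. ennreal (exp (lam * (expectation (\<lambda>z. loss h z) - loss h z)))
          * ennreal (exp (- (lam\<^sup>2 * K\<^sup>2 / 2))) \<partial>\<kappa>)"
    by (intro nn_integral_cong) (simp add: mult_exp_exp flip: ennreal_mult)
  also have "\<dots> = (\<integral>\<^sup>+z. ennreal (exp (lam * (expectation (\<lambda>z. loss h z) - loss h z))) \<partial>\<kappa>)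
      * ennreal (exp (- (lam\<^sup>2 * K\<^sup>2 / 2)))"
    by (intro nn_integral_multc) measurable
  also have "\<dots> \<le> ennreal (exp (lam\<^sup>2 * (K - 0)\<^sup>2 / 8)) * ennreal (exp (- (lam\<^sup>2 * K\<^sup>2 / 2)))"
    using loss_bounds[OF h] sets_eq_imp_space_eq[OF sets] \<open>0 < lam\<close>
    by (intro mult_right_mono nn_integral_exp_expectation_minus_le) auto
  also have "\<dots> = ennreal (exp (lam\<^sup>2 * K\<^sup>2 / 8 - lam\<^sup>2 * K\<^sup>2 / 2))"
    by (simp add: mult_exp_exp flip: ennreal_mult)
  also have "\<dots> \<le> 1"
  proof -
    have "lam\<^sup>2 * K\<^sup>2 / 8 - lam\<^sup>2 * K\<^sup>2 / 2 \<le> 0"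
      by simp
    then show ?thesis
      by simp
  qed
  finally show ?thesis .
qed

lemma nn_integral_gap_exp_moment_le_1:
  assumes \<kappa>: "\<kappa> \<in> space (prob_algebra MZ)" and P: "P \<in> space (prob_algebra MH)" and "0 < lam"
  shows "(\<integral>\<^sup>+z. ennreal (gap_exp_moment lam \<kappa> P z) \<partial>\<kappa>) \<le> 1"
proof -
  interpret \<kappa>: prob_space \<kappa>
    using \<kappa> by (simp add: space_prob_algebra)
  interpret P: prob_space P
    using P by (simp add: space_prob_algebra)
  interpret pair_sigma_finite \<kappa> P
    by unfold_locales
  have sets_\<kappa>: "sets \<kappa> = sets MZ" and sets_P: "sets P = sets MH"
    using \<kappa> P by (simp_all add: space_prob_algebra)
  define e where "e h z = ennreal (exp (lam * ((\<integral>z'. loss h z' \<partial>\<kappa>) - loss h z) - lam\<^sup>2 * K\<^sup>2 / 2))" for h z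
  have "(\<lambda>(z, h). e h z) \<in> borel_measurable (MZ \<Otimes>\<^sub>M MH)"
    unfolding e_def using \<kappa> by measurable
  then have e_meas: "(\<lambda>(z, h). e h z) \<in> borel_measurable (\<kappa> \<Otimes>\<^sub>M P)"
    by (simp cong: measurable_cong_sets[OF sets_pair_measure_cong[OF sets_\<kappa> sets_P] refl])
  have "(\<integral>\<^sup>+z. ennreal (gap_exp_moment lam \<kappa> P z) \<partial>\<kappa>) = (\<integral>\<^sup>+z. \<integral>\<^sup>+h. e h z \<partial>P \<partial>\<kappa>)"
    using integrable_exp_gap[OF \<kappa> P] sets_eq_imp_space_eq[OF sets_\<kappa>]
    by (intro nn_integral_cong) (simp add: gap_exp_moment_def e_def nn_integral_eq_integral)
  also have "\<dots> = (\<integral>\<^sup>+h. \<integral>\<^sup>+z. e h z \<partial>\<kappa> \<partial>P)"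
    using Fubini'[OF e_meas] by simp
  also have "\<dots> \<le> (\<integral>\<^sup>+h. 1 \<partial>P)"
    using nn_integral_exp_gap_le_1[OF \<kappa> _ \<open>0 < lam\<close>] sets_eq_imp_space_eq[OF sets_P]
    by (intro nn_integral_mono) (simp add: e_def)
  also have "\<dots> = 1"
    by (simp add: P.emeasure_space_1)
  finally show ?thesis .
qed

lemma prob_prod_gap_exp_moment_le_inverse:
  fixes m :: nat
  assumes "prob_space \<mu>"
    and sub: "\<And>i. i \<le> m \<Longrightarrow> subalgebra \<mu> (F i)"
    and mono: "\<And>i j. i \<le> j \<Longrightarrow> j \<le> m \<Longrightarrow> sets (F i) \<subseteq> sets (F j)"
    and adapted: "\<And>i. 1 \<le> i \<Longrightarrow> i \<le> m \<Longrightarrow> X i \<in> F i \<rightarrow>\<^sub>M MZ"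
    and rcd: "\<And>i. 1 \<le> i \<Longrightarrow> i \<le> m \<Longrightarrow> is_rcd \<mu> (F (i - 1)) (X i) MZ (\<kappa> i)"
    and P: "\<And>i. 1 \<le> i \<Longrightarrow> i \<le> m \<Longrightarrow> P i \<in> F (i - 1) \<rightarrow>\<^sub>M prob_algebra MH"
    and "0 < lam" "0 < \<delta>"
  defines "A \<equiv> {x \<in> space \<mu>.
    (\<Prod>i\<in>{1..m}. ennreal (gap_exp_moment lam (\<kappa> i x) (P i x) (X i x))) \<le> ennreal (1 / \<delta>)}"
  shows "A \<in> sets \<mu>" and "1 - \<delta> \<le> measure \<mu> A"
proof -
  interpret prob_space \<mu> by fact
  have space_F: "space (F i) = space \<mu>" if "i \<le> m" for i
    using sub[OF that] by (simp add: subalgebra_def)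
  have \<kappa>: "\<kappa> i \<in> F (i - 1) \<rightarrow>\<^sub>M prob_algebra MZ" if "1 \<le> i" "i \<le> m" for i
    using rcd[OF that] by (simp add: is_rcd_def)
  let ?G = "\<lambda>i x z. ennreal (gap_exp_moment lam (\<kappa> i x) (P i x) z)"
  have G_meas: "(\<lambda>(x, z). ?G i x z) \<in> borel_measurable (F (i - 1) \<Otimes>\<^sub>M MZ)"
    if "1 \<le> i" "i \<le> m" for i
    using borel_measurable_gap_exp_moment[OF \<kappa>[OF that] P[OF that]] by measurable
  have G_le_1: "(\<integral>\<^sup>+z. ?G i x z \<partial>\<kappa> i x) \<le> 1" if i: "1 \<le> i" "i \<le> m" and "x \<in> space \<mu>" for i x
  proof -
    have "x \<in> space (F (i - 1))"
      using \<open>x \<in> space \<mu>\<close> space_F[of "i - 1"] i by simp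
    from measurable_space[OF \<kappa>[OF i] this] measurable_space[OF P[OF i] this] \<open>0 < lam\<close>
    show ?thesis
      by (rule nn_integral_gap_exp_moment_le_1)
  qed
  note prod = nn_integral_prod_rcd_le_1[where G="\<lambda>i x z. ennreal (gap_exp_moment lam (\<kappa> i x) (P i x) z)",
      OF \<open>prob_space \<mu>\<close> sub mono adapted rcd G_meas G_le_1]
  show "A \<in> sets \<mu>"
    unfolding A_def using prod(1) by measurable
  show "1 - \<delta> \<le> measure \<mu> A"
    unfolding A_def by (rule prob_le_inverse_ge_1_minus[OF prod \<open>0 < \<delta>\<close>])
qed

lemma integral_expected_loss_le_KL_div:
  assumes \<kappa>: "\<kappa> \<in> space (prob_algebra MZ)" and P: "P \<in> space (prob_algebra MH)"
    and Q: "Q \<in> space (prob_algebra MH)" and z: "z \<in> space MZ" and "0 < lam"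
  shows "ereal (\<integral>h. (\<integral>z'. loss h z' \<partial>\<kappa>) \<partial>Q)
    \<le> ereal (\<integral>h. loss h z \<partial>Q) + KL_div Q P / ereal lam
       + ereal (ln (gap_exp_moment lam \<kappa> P z) / lam + lam * K\<^sup>2 / 2)"
proof (cases "absolutely_continuous P Q \<and> integrable Q (entropy_density (exp 1) P Q)")
  case False
  then have "KL_div Q P = \<infinity>"
    by (simp add: KL_div_def)
  then show ?thesis
    using \<open>0 < lam\<close> by simp
next
  case True
  interpret Q: prob_space Q
    using Q by (simp add: space_prob_algebra)
  have sets: "sets Q = sets P" "sets P = sets MH"
    using P Q by (simp_all add: space_prob_algebra)
  have space_Q: "space Q = space MH"
    using sets_eq_imp_space_eq[of Q MH] sets by simp
  define f where "f h = lam * ((\<integral>z'. loss h z' \<partial>\<kappa>) - loss h z) - lam\<^sup>2 * K\<^sup>2 / 2" for h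
  have "f \<in> borel_measurable MH"
    unfolding f_def using \<kappa> z by measurable
  then have f_meas: "f \<in> borel_measurable P"
    using sets by (simp cong: measurable_cong_sets)
  have f_bounded: "\<bar>f h\<bar> \<le> lam * K + lam\<^sup>2 * K\<^sup>2 / 2" if "h \<in> space P" for h
  proof -
    have "\<bar>lam * ((\<integral>z'. loss h z' \<partial>\<kappa>) - loss h z)\<bar> \<le> lam * K"
      using abs_gap_le[OF \<kappa> _ z, of h] that sets_eq_imp_space_eq[OF sets(2)] \<open>0 < lam\<close>
      by (simp add: abs_mult mult_left_mono)
    moreover have "0 \<le> lam\<^sup>2 * K\<^sup>2 / 2"
      by simp
    ultimately show ?thesis
      unfolding abs_le_iff f_def by linarith
  qed
  have "gap_exp_moment lam \<kappa> P z = (\<integral>h. exp (f h) \<partial>P)"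
    by (simp add: gap_exp_moment_def f_def)
  then have "(\<integral>h. f h \<partial>Q) \<le> KL_divergence (exp 1) P Q + ln (gap_exp_moment lam \<kappa> P z)"
    using True f_bounded P Q
    by (auto intro!: integral_le_KL_divergence_ln_integral_exp[OF _ _ sets(1) _ _ f_meas]
        simp: space_prob_algebra)
  moreover have "(\<integral>h. f h \<partial>Q)
      = lam * ((\<integral>h. (\<integral>z'. loss h z' \<partial>\<kappa>) \<partial>Q) - (\<integral>h. loss h z \<partial>Q)) - lam\<^sup>2 * K\<^sup>2 / 2"
  proof -
    have "(\<lambda>h. \<integral>z'. loss h z' \<partial>\<kappa>) \<in> borel_measurable MH" "(\<lambda>h. loss h z) \<in> borel_measurable MH"
      using \<kappa> z by measurable
    then have "(\<lambda>h. \<integral>z'. loss h z' \<partial>\<kappa>) \<in> borel_measurable Q" "(\<lambda>h. loss h z) \<in> borel_measurable Q"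
      using sets by (simp_all cong: measurable_cong_sets)
    moreover have "\<bar>\<integral>z'. loss h z' \<partial>\<kappa>\<bar> \<le> K" "\<bar>loss h z\<bar> \<le> K" if "h \<in> space Q" for h
      using expected_loss_bounds[OF \<kappa>, of h] loss_bounds[of h z] that z space_Q by auto
    ultimately have "integrable Q (\<lambda>h. \<integral>z'. loss h z' \<partial>\<kappa>)" "integrable Q (\<lambda>h. loss h z)"
      by (auto intro!: Q.integrable_const_bound[where B=K] AE_I2)
    then show ?thesis
      by (simp add: f_def Q.prob_space)
  qed
  ultimately have "lam * ((\<integral>h. (\<integral>z'. loss h z' \<partial>\<kappa>) \<partial>Q) - (\<integral>h. loss h z \<partial>Q))
      \<le> KL_divergence (exp 1) P Q + ln (gap_exp_moment lam \<kappa> P z) + lam\<^sup>2 * K\<^sup>2 / 2"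
    by linarith
  then have "(\<integral>h. (\<integral>z'. loss h z' \<partial>\<kappa>) \<partial>Q) - (\<integral>h. loss h z \<partial>Q)
      \<le> (KL_divergence (exp 1) P Q + ln (gap_exp_moment lam \<kappa> P z) + lam\<^sup>2 * K\<^sup>2 / 2) / lam"
    using \<open>0 < lam\<close> by (simp add: pos_le_divide_eq mult.commute)
  also have "\<dots> = KL_divergence (exp 1) P Q / lam + (ln (gap_exp_moment lam \<kappa> P z) / lam + lam * K\<^sup>2 / 2)"
    using \<open>0 < lam\<close> by (simp add: field_simps power2_eq_square)
  finally show ?thesis
    using True \<open>0 < lam\<close> by (simp add: KL_div_def)
qed

lemma sum_integral_expected_loss_le:
  assumes "finite I" and "0 < lam" and "0 < \<delta>"
    and \<kappa>: "\<And>i. i \<in> I \<Longrightarrow> \<kappa> i \<in> space (prob_algebra MZ)"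
    and P: "\<And>i. i \<in> I \<Longrightarrow> P i \<in> space (prob_algebra MH)"
    and Q: "\<And>i. i \<in> I \<Longrightarrow> Q i \<in> space (prob_algebra MH)"
    and z: "\<And>i. i \<in> I \<Longrightarrow> z i \<in> space MZ"
    and prod_le: "(\<Prod>i\<in>I. ennreal (gap_exp_moment lam (\<kappa> i) (P i) (z i))) \<le> ennreal (1 / \<delta>)"
  shows "ereal (\<Sum>i\<in>I. \<integral>h. (\<integral>z'. loss h z' \<partial>\<kappa> i) \<partial>Q i)
    \<le> (\<Sum>i\<in>I. ereal (\<integral>h. loss h (z i) \<partial>Q i) + KL_div (Q i) (P i) / ereal lam)
       + ereal (lam * real (card I) * K\<^sup>2 / 2) + ereal (ln (1 / \<delta>) / lam)"
proof -
  let ?Z = "\<lambda>i. gap_exp_moment lam (\<kappa> i) (P i) (z i)"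
  have Z_pos: "0 < ?Z i" if "i \<in> I" for i
    using gap_exp_moment_pos[OF \<kappa>[OF that] P[OF that] z[OF that]] .
  have "(\<Prod>i\<in>I. ennreal (?Z i)) = ennreal (\<Prod>i\<in>I. ?Z i)"
    using Z_pos by (intro prod_ennreal) (simp add: less_imp_le)
  then have "(\<Prod>i\<in>I. ?Z i) \<le> 1 / \<delta>"
    using prod_le \<open>0 < \<delta>\<close> by simp
  then have "ln (\<Prod>i\<in>I. ?Z i) \<le> ln (1 / \<delta>)"
    using Z_pos \<open>0 < \<delta>\<close> by (simp add: prod_pos)
  moreover have "ln (\<Prod>i\<in>I. ?Z i) = (\<Sum>i\<in>I. ln (?Z i))"
    using Z_pos \<open>finite I\<close> by (intro ln_prod) (auto simp: less_imp_neq[symmetric])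
  ultimately have "(\<Sum>i\<in>I. ln (?Z i)) / lam \<le> ln (1 / \<delta>) / lam"
    using \<open>0 < lam\<close> by (simp add: divide_right_mono)
  then have "(\<Sum>i\<in>I. ln (?Z i) / lam) \<le> ln (1 / \<delta>) / lam"
    by (simp add: sum_divide_distrib)
  moreover have "(\<Sum>i\<in>I. ln (?Z i) / lam + lam * K\<^sup>2 / 2)
      = (\<Sum>i\<in>I. ln (?Z i) / lam) + lam * real (card I) * K\<^sup>2 / 2"
    by (simp add: sum.distrib mult_ac)
  ultimately have ln_sum: "(\<Sum>i\<in>I. ln (?Z i) / lam + lam * K\<^sup>2 / 2)
      \<le> lam * real (card I) * K\<^sup>2 / 2 + ln (1 / \<delta>) / lam"
    by linarith
  have "ereal (\<Sum>i\<in>I. \<integral>h. (\<integral>z'. loss h z' \<partial>\<kappa> i) \<partial>Q i) = (\<Sum>i\<in>I. ereal (\<integral>h. (\<integral>z'. loss h z' \<partial>\<kappa> i) \<partial>Q i))"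
    by simp
  also have "\<dots> \<le> (\<Sum>i\<in>I. ereal (\<integral>h. loss h (z i) \<partial>Q i) + KL_div (Q i) (P i) / ereal lam
      + ereal (ln (?Z i) / lam + lam * K\<^sup>2 / 2))"
    using integral_expected_loss_le_KL_div[OF \<kappa> P Q z \<open>0 < lam\<close>] by (intro sum_mono) auto
  also have "\<dots> = (\<Sum>i\<in>I. ereal (\<integral>h. loss h (z i) \<partial>Q i) + KL_div (Q i) (P i) / ereal lam)
      + ereal (\<Sum>i\<in>I. ln (?Z i) / lam + lam * K\<^sup>2 / 2)"
    by (simp add: sum.distrib)
  also have "\<dots> \<le> (\<Sum>i\<in>I. ereal (\<integral>h. loss h (z i) \<partial>Q i) + KL_div (Q i) (P i) / ereal lam)
      + ereal (lam * real (card I) * K\<^sup>2 / 2 + ln (1 / \<delta>) / lam)"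
    using ln_sum by (intro add_left_mono) simp
  finally show ?thesis
    by (simp add: add.assoc)
qed

end

theorem theorem2p3:
  fixes MZ :: "'z measure" and MH :: "'h measure" and m :: nat
    and loss :: "'h \<Rightarrow> 'z \<Rightarrow> real" and K :: real
    and \<mu> :: "(nat \<Rightarrow> 'z) measure"
    and F :: "nat \<Rightarrow> (nat \<Rightarrow> 'z) measure"
    and \<kappa> :: "nat \<Rightarrow> (nat \<Rightarrow> 'z) \<Rightarrow> 'z measure"
    and lam \<delta> :: real
    and P Q :: "nat \<Rightarrow> (nat \<Rightarrow> 'z) \<Rightarrow> 'h measure"
  assumes m: "m \<ge> 1"
    and loss_meas: "(\<lambda>(h, z). loss h z) \<in> borel_measurable (MH \<Otimes>\<^sub>M MZ)"
    and K: "K > 0"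
    and loss_bdd: "\<And>h z. h \<in> space MH \<Longrightarrow> z \<in> space MZ \<Longrightarrow> 0 \<le> loss h z \<and> loss h z \<le> K"
    and mu_prob: "prob_space \<mu>"
    and mu_sets: "sets \<mu> = sets (\<Pi>\<^sub>M i\<in>{1..m}. MZ)"
    and filt_sub: "\<And>i. i \<le> m \<Longrightarrow> subalgebra \<mu> (F i)"
    and filt_mono: "\<And>i j. i \<le> j \<Longrightarrow> j \<le> m \<Longrightarrow> sets (F i) \<subseteq> sets (F j)"
    and adapted: "\<And>i. 1 \<le> i \<Longrightarrow> i \<le> m \<Longrightarrow> (\<lambda>S. S i) \<in> measurable (F i) MZ"
    and rcd: "\<And>i. 1 \<le> i \<Longrightarrow> i \<le> m \<Longrightarrow> is_rcd \<mu> (F (i - 1)) (\<lambda>S. S i) MZ (\<kappa> i)"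
    and lam: "lam > 0"
    and delta: "0 < \<delta>" "\<delta> < 1"
    and Q_kernel: "\<And>i. 1 \<le> i \<Longrightarrow> i \<le> m \<Longrightarrow> Q i \<in> measurable (\<Pi>\<^sub>M i\<in>{1..m}. MZ) (prob_algebra MH)"
    and P_kernel: "\<And>i. 1 \<le> i \<Longrightarrow> i \<le> m \<Longrightarrow> P i \<in> measurable (\<Pi>\<^sub>M i\<in>{1..m}. MZ) (prob_algebra MH)"
    and P_pred: "\<And>i. 1 \<le> i \<Longrightarrow> i \<le> m \<Longrightarrow> P i \<in> measurable (F (i - 1)) (prob_algebra MH)"
    and P_1_data_free: "\<And>S S'. S \<in> space \<mu> \<Longrightarrow> S' \<in> space \<mu> \<Longrightarrow> P 1 S = P 1 S'"
    and P_ac: "\<And>i S. 2 \<le> i \<Longrightarrow> i \<le> m \<Longrightarrow> S \<in> space \<mu> \<Longrightarrow>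
                 absolutely_continuous (P (i - 1) S) (P i S)"
  shows "\<exists>A \<in> sets \<mu>. measure \<mu> A \<ge> 1 - \<delta> \<and>
     (\<forall>S \<in> A.
        ereal (\<Sum>i = 1..m. \<integral>h. (\<integral>z. loss h z \<partial>(\<kappa> i S)) \<partial>(Q i S))
        \<le> (\<Sum>i = 1..m. ereal (\<integral>h. loss h (S i) \<partial>(Q i S)) + KL_div (Q i S) (P i S) / ereal lam)
           + ereal (lam * real m * K\<^sup>2 / 2) + ereal (ln (1 / \<delta>) / lam))"
proof -
  interpret bounded_loss MH MZ loss K
    using loss_meas loss_bdd by unfold_locales auto
  have \<kappa>: "\<kappa> i \<in> F (i - 1) \<rightarrow>\<^sub>M prob_algebra MZ" if "1 \<le> i" "i \<le> m" for i
    using rcd[OF that] by (simp add: is_rcd_def)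
  have kernels: "\<kappa> i S \<in> space (prob_algebra MZ)" "P i S \<in> space (prob_algebra MH)"
    "Q i S \<in> space (prob_algebra MH)" "S i \<in> space MZ" if "i \<in> {1..m}" "S \<in> space \<mu>" for i S
    using that measurable_space[OF \<kappa>] measurable_space[OF P_pred] measurable_space[OF Q_kernel]
      filt_sub sets_eq_imp_space_eq[OF mu_sets]
    by (auto simp: space_PiM subalgebra_def)
  define A where "A = {S \<in> space \<mu>.
    (\<Prod>i\<in>{1..m}. ennreal (gap_exp_moment lam (\<kappa> i S) (P i S) (S i))) \<le> ennreal (1 / \<delta>)}"
  have "A \<in> sets \<mu>" "1 - \<delta> \<le> measure \<mu> A"
    using prob_prod_gap_exp_moment_le_inverse[where X="\<lambda>i S. S i",
        OF mu_prob filt_sub filt_mono adapted rcd P_pred lam delta(1)]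
    unfolding A_def by simp_all
  moreover have "ereal (\<Sum>i = 1..m. \<integral>h. (\<integral>z. loss h z \<partial>(\<kappa> i S)) \<partial>(Q i S))
      \<le> (\<Sum>i = 1..m. ereal (\<integral>h. loss h (S i) \<partial>(Q i S)) + KL_div (Q i S) (P i S) / ereal lam)
         + ereal (lam * real m * K\<^sup>2 / 2) + ereal (ln (1 / \<delta>) / lam)" if "S \<in> A" for S
  proof -
    have S: "S \<in> space \<mu>"
      and "(\<Prod>i\<in>{1..m}. ennreal (gap_exp_moment lam (\<kappa> i S) (P i S) (S i))) \<le> ennreal (1 / \<delta>)"
      using that by (simp_all add: A_def)
    then show ?thesis
      using sum_integral_expected_loss_le[where I="{1..m}" and \<kappa>="\<lambda>i. \<kappa> i S" and P="\<lambda>i. P i S"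
          and Q="\<lambda>i. Q i S" and z="\<lambda>i. S i", OF _ lam delta(1)] kernels[OF _ S]
      by simp
  qed
  ultimately show ?thesis
    by blast
qed

end
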